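(* Let $G$ be a group. Then $G$ is a $TR^{*}$-group if and only if there exists a normal subgroup $K$ of $G$ which is a torsion group such that $G/K$ is an $R^{*}$-group.
   Context: For $g,x$ in a group, $g^{x}:=xgx^{-1}$. A non-trivial element $g$ of a group $G$ is a generalized torsion element if there exist a positive integer $n$ and $x_1,\ldots,x_n\in G$ with $g^{x_1}g^{x_2}\cdots g^{x_n}=1$. A generalized torsion element is genuine if it is not a torsion element. A group is an $R^{*}$-group if it has no generalized torsion elements. A group is a $TR^{*}$-group if it has no genuine generalized torsion element, i.e. every generalized torsion element is a torsion element. A torsion group is a group all of whose elements have finite order. *)

theory Defs
  imports "HOL-Algebra.Algebra"
begin

definition conj_el :: "('a, 'b) monoid_scheme \<Rightarrow> 'a \<Rightarrow> 'a \<Rightarrow> 'a" where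
  "conj_el G g x = x \<otimes>\<^bsub>G\<^esub> g \<otimes>\<^bsub>G\<^esub> inv\<^bsub>G\<^esub> x"

definition conj_prod :: "('a, 'b) monoid_scheme \<Rightarrow> 'a \<Rightarrow> 'a list \<Rightarrow> 'a" where
  "conj_prod G g xs = foldr (\<lambda>x acc. conj_el G g x \<otimes>\<^bsub>G\<^esub> acc) xs \<one>\<^bsub>G\<^esub>"

definition torsion_element :: "('a, 'b) monoid_scheme \<Rightarrow> 'a \<Rightarrow> bool" where
  "torsion_element G g \<longleftrightarrow> g \<in> carrier G \<and> (\<exists>m::nat. m > 0 \<and> g [^]\<^bsub>G\<^esub> m = \<one>\<^bsub>G\<^esub>)"

definition gen_torsion_element :: "('a, 'b) monoid_scheme \<Rightarrow> 'a \<Rightarrow> bool" where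
  "gen_torsion_element G g \<longleftrightarrow> g \<in> carrier G \<and> g \<noteq> \<one>\<^bsub>G\<^esub> \<and>
     (\<exists>xs. xs \<noteq> [] \<and> set xs \<subseteq> carrier G \<and> conj_prod G g xs = \<one>\<^bsub>G\<^esub>)"

definition R_star_group :: "('a, 'b) monoid_scheme \<Rightarrow> bool" where
  "R_star_group G \<longleftrightarrow> \<not> (\<exists>g. gen_torsion_element G g)"

definition TR_star_group :: "('a, 'b) monoid_scheme \<Rightarrow> bool" where
  "TR_star_group G \<longleftrightarrow> (\<forall>g. gen_torsion_element G g \<longrightarrow> torsion_element G g)"

definition torsion_subgroup :: "'a set \<Rightarrow> ('a, 'b) monoid_scheme \<Rightarrow> bool" where
  "torsion_subgroup H G \<longleftrightarrow> (\<forall>h\<in>H. torsion_element G h)"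

end

theory Submission
  imports Defs
begin

text \<open>
  If \<open>a\<^sup>m = b\<^sup>n = 1\<close>, then expanding \<open>b\<^sup>n = (a\<inverse>(ab))\<^sup>n\<close> writes \<open>a\<^sup>n\<close> as a product of
  \<open>n\<close> conjugates of \<open>ab\<close>; its \<open>m\<close>-th power is then a product of conjugates of \<open>ab\<close> equal
  to \<open>1\<close>, so \<open>ab\<close> is trivial or generalized torsion. Hence in a \<open>TR\<^sup>*\<close>-group the torsion
  elements form a normal subgroup \<open>K\<close>. A relation among conjugates of \<open>gK\<close> in \<open>G/K\<close> lifts
  to a product of conjugates of \<open>g\<close> lying in \<open>K\<close>, i.e. of finite order, so \<open>g\<close> is torsion
  and \<open>gK\<close> trivial: \<open>G/K\<close> is an \<open>R\<^sup>*\<close>-group. Conversely, if \<open>K\<close> is a torsion normal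
  subgroup with \<open>G/K\<close> an \<open>R\<^sup>*\<close>-group, a generalized torsion element of \<open>G\<close> outside \<open>K\<close>
  would map to a generalized torsion element of \<open>G/K\<close>.
\<close>

context group
begin

lemma conj_el_closed [simp]:
  "g \<in> carrier G \<Longrightarrow> x \<in> carrier G \<Longrightarrow> conj_el G g x \<in> carrier G"
  by (simp add: conj_el_def)

lemma conj_prod_Nil [simp]: "conj_prod G g [] = \<one>"
  by (simp add: conj_prod_def)

lemma conj_prod_Cons [simp]: "conj_prod G g (x # xs) = conj_el G g x \<otimes> conj_prod G g xs"
  by (simp add: conj_prod_def)

lemma conj_prod_closed [simp]:
  "g \<in> carrier G \<Longrightarrow> set xs \<subseteq> carrier G \<Longrightarrow> conj_prod G g xs \<in> carrier G"
  by (induction xs) auto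

lemma conj_prod_append:
  assumes "g \<in> carrier G" "set xs \<subseteq> carrier G" "set ys \<subseteq> carrier G"
  shows "conj_prod G g (xs @ ys) = conj_prod G g xs \<otimes> conj_prod G g ys"
  using assms(2) by (induction xs) (use assms in \<open>auto simp: m_assoc\<close>)

lemma conj_prod_pow:
  assumes "g \<in> carrier G" "set xs \<subseteq> carrier G"
  shows "conj_prod G g xs [^] (m::nat) = conj_prod G g (concat (replicate m xs))"
proof (induction m)
  case (Suc m)
  have "set (concat (replicate m xs)) \<subseteq> carrier G"
    using assms(2) by auto
  moreover have "concat (replicate (Suc m) xs) = concat (replicate m xs) @ xs"
    by (simp flip: replicate_append_same)
  ultimately show ?case
    using Suc assms by (simp add: conj_prod_append del: replicate.simps)
qed simp

lemma gen_torsion_if_torsion_conj_prod: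
  assumes "g \<in> carrier G" "g \<noteq> \<one>" "xs \<noteq> []" "set xs \<subseteq> carrier G"
    and "torsion_element G (conj_prod G g xs)"
  shows "gen_torsion_element G g"
proof -
  obtain m :: nat where "m > 0" and "conj_prod G g xs [^] m = \<one>"
    using assms(5) unfolding torsion_element_def by blast
  then have "conj_prod G g (concat (replicate m xs)) = \<one>"
    and "concat (replicate m xs) \<noteq> []"
    using assms by (simp_all add: conj_prod_pow)
  moreover have "set (concat (replicate m xs)) \<subseteq> carrier G"
    using assms(4) by auto
  ultimately show ?thesis
    using assms(1,2) unfolding gen_torsion_element_def by blast
qed

lemma inv_mult_pow_eq_conj_prod:
  assumes a: "a \<in> carrier G" and g: "g \<in> carrier G"
  shows "(inv a \<otimes> g) [^] (n::nat) =
    conj_prod G g (map (\<lambda>i. inv a [^] Suc i) [0..<n]) \<otimes> inv a [^] n"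
proof (induction n)
  case (Suc n)
  let ?xs = "map (\<lambda>i. inv a [^] Suc i) [0..<n]"
  let ?x = "inv a [^] Suc n"
  have xs: "set ?xs \<subseteq> carrier G" and x: "?x \<in> carrier G"
    using a by auto
  have "(inv a \<otimes> g) [^] Suc n = conj_prod G g ?xs \<otimes> (inv a [^] n \<otimes> (inv a \<otimes> g))"
    using Suc a g xs by (simp add: m_assoc del: nat_pow_Suc)
  also have "inv a [^] n \<otimes> (inv a \<otimes> g) = conj_el G g ?x \<otimes> ?x"
    using a g x by (simp add: conj_el_def m_assoc)
  also have "conj_prod G g ?xs \<otimes> (conj_el G g ?x \<otimes> ?x) = conj_prod G g (?xs @ [?x]) \<otimes> ?x"
    using g x xs by (simp add: conj_prod_append m_assoc del: nat_pow_Suc)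
  finally show ?case by (simp del: nat_pow_Suc)
qed simp

lemma torsion_element_one: "torsion_element G \<one>"
  unfolding torsion_element_def by auto

lemma torsion_element_inv: "torsion_element G a \<Longrightarrow> torsion_element G (inv a)"
  unfolding torsion_element_def by (auto simp: nat_pow_inv)

lemma torsion_element_pow: "torsion_element G a \<Longrightarrow> torsion_element G (a [^] (n::nat))"
  unfolding torsion_element_def by (metis nat_pow_closed nat_pow_pow mult.commute nat_pow_one)

lemma conj_el_hom: "x \<in> carrier G \<Longrightarrow> (\<lambda>g. conj_el G g x) \<in> hom G G"
  by (rule homI) (simp_all add: conj_el_def m_assoc inv_solve_left)

end

context group_hom
begin

lemma torsion_element_hom: "torsion_element G a \<Longrightarrow> torsion_element H (h a)"
  unfolding torsion_element_def by (metis hom_nat_pow hom_one hom_closed)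

lemma hom_conj_el:
  "g \<in> carrier G \<Longrightarrow> x \<in> carrier G \<Longrightarrow> h (conj_el G g x) = conj_el H (h g) (h x)"
  by (simp add: conj_el_def)

lemma hom_conj_prod:
  "g \<in> carrier G \<Longrightarrow> set xs \<subseteq> carrier G \<Longrightarrow>
    h (conj_prod G g xs) = conj_prod H (h g) (map h xs)"
  by (induction xs) (simp_all add: hom_conj_el)

lemma gen_torsion_element_hom:
  assumes "gen_torsion_element G g" "h g \<noteq> \<one>\<^bsub>H\<^esub>"
  shows "gen_torsion_element H (h g)"
proof -
  obtain xs where xs: "g \<in> carrier G" "xs \<noteq> []" "set xs \<subseteq> carrier G" "conj_prod G g xs = \<one>"
    using assms(1) unfolding gen_torsion_element_def by blast
  then have "conj_prod H (h g) (map h xs) = \<one>\<^bsub>H\<^esub>"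
    using hom_conj_prod by (metis hom_one)
  moreover have "set (map h xs) \<subseteq> carrier H"
    using xs(3) by auto
  ultimately show ?thesis
    using xs(1,2) assms(2) unfolding gen_torsion_element_def by (metis Nil_is_map_conv hom_closed)
qed

end

lemma (in normal) group_hom_Mod: "group_hom G (G Mod H) (\<lambda>a. H #> a)"
  by (intro group_hom.intro group_hom_axioms.intro is_group factorgroup_is_group r_coset_hom_Mod)

context group
begin

lemma torsion_element_conj:
  "torsion_element G a \<Longrightarrow> x \<in> carrier G \<Longrightarrow> torsion_element G (conj_el G a x)"
  using group_hom.torsion_element_hom[of G G "\<lambda>g. conj_el G g x"] conj_el_hom is_group
  by (simp add: group_hom_def group_hom_axioms_def)

lemma TR_star_torsion_mult:
  assumes TR: "TR_star_group G" and a: "torsion_element G a" and b: "torsion_element G b"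
  shows "torsion_element G (a \<otimes> b)"
proof (cases "a \<otimes> b = \<one>")
  case True
  then show ?thesis using torsion_element_one by simp
next
  case False
  obtain n :: nat where "n > 0" "b [^] n = \<one>" and ab: "a \<in> carrier G" "b \<in> carrier G"
    using a b unfolding torsion_element_def by blast
  let ?xs = "map (\<lambda>i. inv a [^] Suc i) [0..<n]"
  have xs: "set ?xs \<subseteq> carrier G" "?xs \<noteq> []"
    using ab \<open>n > 0\<close> by auto
  have "inv a \<otimes> (a \<otimes> b) = b"
    using ab by (simp add: m_assoc [symmetric])
  then have "conj_prod G (a \<otimes> b) ?xs \<otimes> inv (a [^] n) = \<one>"
    using inv_mult_pow_eq_conj_prod[of a "a \<otimes> b" n] ab \<open>b [^] n = \<one>\<close>
    by (simp add: nat_pow_inv del: nat_pow_Suc)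
  then have "inv (inv (a [^] n)) = conj_prod G (a \<otimes> b) ?xs"
    using ab xs by (intro inv_equality) auto
  then have "conj_prod G (a \<otimes> b) ?xs = a [^] n"
    using ab by simp
  then have "gen_torsion_element G (a \<otimes> b)"
    using gen_torsion_if_torsion_conj_prod[of "a \<otimes> b" ?xs] False ab xs torsion_element_pow[OF a]
    by simp
  then show ?thesis
    using TR unfolding TR_star_group_def by blast
qed

lemma TR_star_torsion_normal:
  assumes "TR_star_group G"
  shows "{g. torsion_element G g} \<lhd> G"
proof -
  have "subgroup {g. torsion_element G g} G"
  proof (rule subgroupI)
    show "{g. torsion_element G g} \<subseteq> carrier G"
      by (auto simp: torsion_element_def)
  qed (auto intro: torsion_element_one torsion_element_inv TR_star_torsion_mult [OF assms])
  then show ?thesis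
    using torsion_element_conj by (auto simp: normal_inv_iff conj_el_def)
qed

lemma R_star_Mod_torsion:
  assumes TR: "TR_star_group G"
  defines "K \<equiv> {g. torsion_element G g}"
  shows "R_star_group (G Mod K)"
  unfolding R_star_group_def
proof
  assume "\<exists>C. gen_torsion_element (G Mod K) C"
  then obtain C Cs where C: "C \<in> carrier (G Mod K)" "C \<noteq> K" and Cs: "Cs \<noteq> []"
      "set Cs \<subseteq> carrier (G Mod K)" "conj_prod (G Mod K) C Cs = K"
    unfolding gen_torsion_element_def by auto
  interpret normal K G
    unfolding K_def by (rule TR_star_torsion_normal [OF TR])
  interpret proj: group_hom G "G Mod K" "\<lambda>a. K #> a"
    by (rule group_hom_Mod)
  obtain g where g: "g \<in> carrier G" "C = K #> g"
    using C by (auto simp: carrier_FactGroup)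
  obtain xs where xs: "set xs \<subseteq> carrier G" "Cs = map (\<lambda>a. K #> a) xs"
  proof -
    have "Cs \<in> lists ((\<lambda>a. K #> a) ` carrier G)"
      using Cs(2) by (auto simp: carrier_FactGroup)
    then have "Cs \<in> map (\<lambda>a. K #> a) ` lists (carrier G)"
      by (simp only: lists_image)
    then show ?thesis using that by auto
  qed
  have "K #> conj_prod G g xs = K"
    using Cs(3) g xs proj.hom_conj_prod by simp
  then have "conj_prod G g xs \<in> K"
    using coset_join1 g xs subgroup_axioms by simp
  then have "torsion_element G (conj_prod G g xs)"
    unfolding K_def by simp
  moreover have "g \<notin> K"
    using C g coset_join2 subgroup_axioms by blast
  ultimately have "gen_torsion_element G g"
    using gen_torsion_if_torsion_conj_prod[of g xs] g xs Cs(1) torsion_element_one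
    unfolding K_def by auto
  with TR \<open>g \<notin> K\<close> show False
    unfolding TR_star_group_def K_def by blast
qed

end

lemma (in normal) TR_star_if_torsion_Mod_R_star:
  assumes "torsion_subgroup H G" "R_star_group (G Mod H)"
  shows "TR_star_group G"
  unfolding TR_star_group_def
proof (intro allI impI)
  fix g assume g: "gen_torsion_element G g"
  interpret proj: group_hom G "G Mod H" "\<lambda>a. H #> a"
    by (rule group_hom_Mod)
  show "torsion_element G g"
  proof (cases "g \<in> H")
    case True
    then show ?thesis using assms(1) unfolding torsion_subgroup_def by blast
  next
    case False
    then have "H #> g \<noteq> H"
      using g coset_join1 subgroup_axioms unfolding gen_torsion_element_def by blast
    then have "gen_torsion_element (G Mod H) (H #> g)"
      using proj.gen_torsion_element_hom [OF g] by simp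
    then show ?thesis
      using assms(2) unfolding R_star_group_def by blast
  qed
qed

theorem theorem1p1:
  fixes G :: "('a, 'b) monoid_scheme"
  assumes "group G"
  shows "TR_star_group G \<longleftrightarrow>
           (\<exists>K. K \<lhd> G \<and> torsion_subgroup K G \<and> R_star_group (G Mod K))"
proof
  interpret group G by (rule assms)
  assume "TR_star_group G"
  then show "\<exists>K. K \<lhd> G \<and> torsion_subgroup K G \<and> R_star_group (G Mod K)"
    using TR_star_torsion_normal R_star_Mod_torsion unfolding torsion_subgroup_def by blast
next
  assume "\<exists>K. K \<lhd> G \<and> torsion_subgroup K G \<and> R_star_group (G Mod K)"
  then show "TR_star_group G"
    using normal.TR_star_if_torsion_Mod_R_star by blast
qed

end
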